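(* Consider the model described in the context with private signals that are conditionally independent given $H$ but not necessarily identically distributed, and with a unanimity fusion rule, i.e. $L=1$ (\textsc{or}) or $L=N$ (\textsc{and}). Then secret voting is optimal: the minimum team Bayes risk under public voting, for any order in which the agents act, equals the minimum team Bayes risk under secret voting, which (for $L=1$) is $\min_{\lambda_1,\dots,\lambda_N}\big[c_{10}p_0\big(1-\prod_{n=1}^N(1-P^{\rm I}_{e,n})\big)+c_{01}p_1\prod_{n=1}^N P^{\rm II}_{e,n}\big]$ and (for $L=N$) is $\min_{\lambda_1,\dots,\lambda_N}\big[c_{10}p_0\prod_{n=1}^N P^{\rm I}_{e,n}+c_{01}p_1\big(1-\prod_{n=1}^N(1-P^{\rm II}_{e,n})\big)\big]$. Moreover, there is an optimal public-voting strategy in which each agent uses her optimal secret-voting threshold regardless of the public signals and of her position in the order; thus neither the public signals nor the ordering of agents affects the optimal decision rules or the resulting performance.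
   Context: Binary hypothesis $H\in\{0,1\}$ with prior $p_0=\mathbb P\{H=0\}\in(0,1)$, $p_1=1-p_0$. Agents $n=1,\dots,N$ each observe a private signal $Y_n$ with likelihood $f_{Y_n|H}(y\mid h)$; the $Y_n$ are conditionally independent given $H$, and each likelihood ratio $f_{Y_n|H}(y\mid 1)/f_{Y_n|H}(y\mid 0)$ is strictly increasing in $y$. Each agent makes a local decision $\widehat H_n\in\{0,1\}$ by a threshold test: $\widehat H_n=1$ iff $Y_n\ge$ (her threshold). Local error probabilities: $P^{\rm I}_{e,n}=\mathbb P\{\widehat H_n=1\mid H=0\}$, $P^{\rm II}_{e,n}=\mathbb P\{\widehat H_n=0\mid H=1\}$, determined by Agent $n$'s threshold $\lambda_n$. The team decision uses the $L$-out-of-$N$ fusion rule: $\widehat H=1$ iff $\sum_{n=1}^N\widehat H_n\ge L$. The team Bayes risk is $R=c_{10}p_0\,\mathbb P\{\widehat H=1\mid H=0\}+c_{01}p_1\,\mathbb P\{\widehat H=0\mid H=1\}$ with costs $c_{10},c_{01}>0$; "optimal" means minimizing $R$ over all allowed thresholds. Secret voting: each Agent $n$ uses a single threshold $\lambda_n$ (her decision depends only on $Y_n$). Public voting: agents decide in some fixed order, each agent observes all earlier agents' decisions (the "public signals") and uses a threshold that may depend on the observed decisions. *)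

theory Defs
  imports "HOL-Probability.Probability"
begin

text \<open>Hypotheses: False encodes H = 0, True encodes H = 1.
  Agents are 0, ..., N-1.  f n h is the conditional density of Y_n given H = h
  (w.r.t. Lebesgue measure).  A local decision True means "decide 1".\<close>

definition sig_dist :: "(real \<Rightarrow> real) \<Rightarrow> real measure" where
  "sig_dist g = density lborel (\<lambda>y. ennreal (g y))"

definition dec_prob :: "(real \<Rightarrow> real) \<Rightarrow> real \<Rightarrow> bool \<Rightarrow> real" where
  "dec_prob g lam d =
     (if d then measure (sig_dist g) {lam..} else measure (sig_dist g) {..<lam})"

definition PeI :: "(nat \<Rightarrow> bool \<Rightarrow> real \<Rightarrow> real) \<Rightarrow> nat \<Rightarrow> real \<Rightarrow> real" where
  "PeI f n lam = dec_prob (f n False) lam True"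

definition PeII :: "(nat \<Rightarrow> bool \<Rightarrow> real \<Rightarrow> real) \<Rightarrow> nat \<Rightarrow> real \<Rightarrow> real" where
  "PeII f n lam = dec_prob (f n True) lam False"

definition fusion :: "nat \<Rightarrow> bool list \<Rightarrow> bool" where
  "fusion L ds = (L \<le> length (filter id ds))"

text \<open>Secret voting: agent n uses the single threshold lam n.
  Probability that the team decides d given H = h (sum over all decision vectors,
  using conditional independence).\<close>
definition team_prob_sec ::
  "nat \<Rightarrow> nat \<Rightarrow> (nat \<Rightarrow> bool \<Rightarrow> real \<Rightarrow> real) \<Rightarrow> (nat \<Rightarrow> real) \<Rightarrow> bool \<Rightarrow> bool \<Rightarrow> real" where
  "team_prob_sec N L f lam h d =
     (\<Sum>ds\<in>{ds. length ds = N \<and> fusion L ds = d}.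
        \<Prod>n<N. dec_prob (f n h) (lam n) (ds ! n))"

text \<open>Public voting: sigma k is the agent acting at position k (sigma is a
  bijection of {0..<N}); s k hist is the threshold used by the agent at position k
  after observing the list hist of the k earlier public decisions.
  ds lists the decisions in the order of acting.\<close>
definition team_prob_pub ::
  "nat \<Rightarrow> nat \<Rightarrow> (nat \<Rightarrow> bool \<Rightarrow> real \<Rightarrow> real) \<Rightarrow> (nat \<Rightarrow> nat)
     \<Rightarrow> (nat \<Rightarrow> bool list \<Rightarrow> real) \<Rightarrow> bool \<Rightarrow> bool \<Rightarrow> real" where
  "team_prob_pub N L f \<sigma> s h d =
     (\<Sum>ds\<in>{ds. length ds = N \<and> fusion L ds = d}.
        \<Prod>k<N. dec_prob (f (\<sigma> k) h) (s k (take k ds)) (ds ! k))"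

definition risk_sec ::
  "nat \<Rightarrow> nat \<Rightarrow> (nat \<Rightarrow> bool \<Rightarrow> real \<Rightarrow> real) \<Rightarrow> real \<Rightarrow> real \<Rightarrow> real
     \<Rightarrow> (nat \<Rightarrow> real) \<Rightarrow> real" where
  "risk_sec N L f p0 c10 c01 lam =
     c10 * p0 * team_prob_sec N L f lam False True
     + c01 * (1 - p0) * team_prob_sec N L f lam True False"

definition risk_pub ::
  "nat \<Rightarrow> nat \<Rightarrow> (nat \<Rightarrow> bool \<Rightarrow> real \<Rightarrow> real) \<Rightarrow> real \<Rightarrow> real \<Rightarrow> real
     \<Rightarrow> (nat \<Rightarrow> nat) \<Rightarrow> (nat \<Rightarrow> bool list \<Rightarrow> real) \<Rightarrow> real" where
  "risk_pub N L f p0 c10 c01 \<sigma> s =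
     c10 * p0 * team_prob_pub N L f \<sigma> s False True
     + c01 * (1 - p0) * team_prob_pub N L f \<sigma> s True False"

definition min_risk_sec ::
  "nat \<Rightarrow> nat \<Rightarrow> (nat \<Rightarrow> bool \<Rightarrow> real \<Rightarrow> real) \<Rightarrow> real \<Rightarrow> real \<Rightarrow> real \<Rightarrow> real" where
  "min_risk_sec N L f p0 c10 c01 = (INF lam. risk_sec N L f p0 c10 c01 lam)"

definition min_risk_pub ::
  "nat \<Rightarrow> nat \<Rightarrow> (nat \<Rightarrow> bool \<Rightarrow> real \<Rightarrow> real) \<Rightarrow> real \<Rightarrow> real \<Rightarrow> real
     \<Rightarrow> (nat \<Rightarrow> nat) \<Rightarrow> real" where
  "min_risk_pub N L f p0 c10 c01 \<sigma> = (INF s. risk_pub N L f p0 c10 c01 \<sigma> s)"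

end

theory Submission
  imports Defs
begin

(* Under the OR rule (L = 1) the team decides 0 only if every agent votes 0, and
   under the AND rule (L = N) it decides 1 only if every agent votes 1.  Calling this
   exceptional decision c, the team's conditional probabilities are determined by the
   probability of the single all-c decision path: the complementary outcome has
   probability one minus it, by the chain rule for sequential decisions.  Along
   that path the k-th agent to act has only ever seen c's, so a public strategy s is
   used only through the thresholds s k [c,...,c]; reading them as secret thresholds
   (after undoing the order sigma) gives a secret rule with the same risk, and
   conversely every secret rule is a history-independent public rule.  Hence the
   achievable risks coincide for every order, so do their infima, and an optimal
   secret threshold vector is optimal for public voting as well. *)

lemma lists_length_Suc:
  "{ds::'a list. length ds = Suc N} = (\<lambda>(b, ds). b # ds) ` (UNIV \<times> {ds. length ds = N})"
  by (auto simp: length_Suc_conv)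

lemma sequential_total_prob:
  fixes q :: "nat \<Rightarrow> bool list \<Rightarrow> bool \<Rightarrow> real"
  assumes "\<And>k hist. k < N \<Longrightarrow> q k hist True + q k hist False = 1"
  shows "(\<Sum>ds\<in>{ds. length ds = N}. \<Prod>k<N. q k (take k ds) (ds ! k)) = 1"
  using assms
proof (induction N arbitrary: q)
  case 0
  then show ?case by simp
next
  case (Suc N)
  let ?tail = "\<lambda>b. \<Sum>ds\<in>{ds. length ds = N}. \<Prod>k<N. q (Suc k) (b # take k ds) (ds ! k)"
  have tail: "?tail b = 1" for b
    using Suc.IH[of "\<lambda>k hist. q (Suc k) (b # hist)"] Suc.prems by simp
  have inj: "inj_on (\<lambda>(b, ds). b # ds) (UNIV \<times> {ds::bool list. length ds = N})"
    by (auto simp: inj_on_def)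
  have "(\<Sum>ds\<in>{ds. length ds = Suc N}. \<Prod>k<Suc N. q k (take k ds) (ds ! k))
      = (\<Sum>b\<in>UNIV. \<Sum>ds\<in>{ds. length ds = N}. \<Prod>k<Suc N. q k (take k (b # ds)) ((b # ds) ! k))"
    unfolding lists_length_Suc sum.reindex[OF inj] sum.cartesian_product
    by (simp add: case_prod_unfold)
  also have "\<dots> = (\<Sum>b\<in>UNIV. q 0 [] b * ?tail b)"
    by (simp only: prod.lessThan_Suc_shift) (simp add: sum_distrib_left)
  also have "\<dots> = 1"
    using Suc.prems[of 0] by (simp add: tail UNIV_bool add.commute)
  finally show ?case .
qed

(* Under L-out-of-N fusion the team decision c requires all N votes to be c:
   the OR rule with c = False or the AND rule with c = True. *)
definition unanimous_for :: "nat \<Rightarrow> nat \<Rightarrow> bool \<Rightarrow> bool" where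
  "unanimous_for N L c \<longleftrightarrow> (L = 1 \<and> \<not> c) \<or> (L = N \<and> c)"

lemma fusion_unanimous:
  assumes "unanimous_for N L c" and "length ds = N"
  shows "fusion L ds = c \<longleftrightarrow> ds = replicate N c"
  using assms unfolding unanimous_for_def
proof (elim disjE conjE)
  assume "L = 1" "\<not> c"
  have "fusion 1 ds \<longleftrightarrow> True \<in> set ds"
    by (auto simp: fusion_def Suc_le_eq filter_empty_conv)
  moreover have "True \<notin> set ds \<longleftrightarrow> ds = replicate N False"
    using assms(2) by (metis (full_types) in_set_replicate replicate_eqI)
  ultimately show ?thesis using \<open>L = 1\<close> \<open>\<not> c\<close> by simp
next
  assume "L = N" "c"
  have "fusion N ds \<longleftrightarrow> filter id ds = ds"
    using assms(2) length_filter_le[of id ds] unfolding fusion_def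
    by (metis le_antisym length_filter_less order.refl filter_id_conv not_le)
  also have "\<dots> \<longleftrightarrow> ds = replicate N True"
    using assms(2) by (metis (full_types) filter_id_conv id_apply in_set_replicate replicate_eqI)
  finally show ?thesis using \<open>L = N\<close> \<open>c\<close> by simp
qed

lemma team_outcomes_unanimous:
  assumes "unanimous_for N L c"
  shows "{ds. length ds = N \<and> fusion L ds = d} =
         (if d = c then {replicate N c} else {ds. length ds = N} - {replicate N c})"
proof -
  have "length ds = N \<and> fusion L ds = d \<longleftrightarrow>
        ds \<in> (if d = c then {replicate N c} else {ds. length ds = N} - {replicate N c})" for ds
    using fusion_unanimous[OF assms, of ds] by (cases "length ds = N") auto
  then show ?thesis by blast
qed

lemma sequential_unanimous_prob:
  fixes q :: "nat \<Rightarrow> bool list \<Rightarrow> bool \<Rightarrow> real"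
  assumes q: "\<And>k hist. k < N \<Longrightarrow> q k hist True + q k hist False = 1"
    and unanimous: "unanimous_for N L c"
  shows "(\<Sum>ds\<in>{ds. length ds = N \<and> fusion L ds = d}. \<Prod>k<N. q k (take k ds) (ds ! k))
       = (if d = c then \<Prod>k<N. q k (replicate k c) c else 1 - (\<Prod>k<N. q k (replicate k c) c))"
proof -
  let ?w = "\<lambda>ds. \<Prod>k<N. q k (take k ds) (ds ! k)"
  have w_all_c: "?w (replicate N c) = (\<Prod>k<N. q k (replicate k c) c)"
    by (intro prod.cong) auto
  have fin: "finite {ds::bool list. length ds = N}"
    using finite_lists_length_eq[of "UNIV :: bool set" N] by simp
  show ?thesis
  proof (cases "d = c")
    case True
    then show ?thesis using w_all_c by (simp add: team_outcomes_unanimous[OF unanimous])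
  next
    case False
    then have "(\<Sum>ds\<in>{ds. length ds = N \<and> fusion L ds = d}. ?w ds)
             = (\<Sum>ds\<in>{ds. length ds = N}. ?w ds) - ?w (replicate N c)"
      by (simp add: team_outcomes_unanimous[OF unanimous] sum_diff1 fin)
    then show ?thesis using sequential_total_prob[of N q, OF q] w_all_c False by simp
  qed
qed

lemma dec_prob_complement:
  assumes "prob_space (sig_dist g)"
  shows "dec_prob g lam True + dec_prob g lam False = 1"
proof -
  interpret prob_space "sig_dist g" by fact
  have "{..<lam} = space (sig_dist g) - {lam..}"
    by (auto simp: sig_dist_def)
  moreover have "{lam..} \<in> events"
    by (simp add: sig_dist_def)
  ultimately show ?thesis
    using prob_compl by (simp add: dec_prob_def)
qed

lemma team_prob_sec_as_pub:
  "team_prob_sec N L f lam = team_prob_pub N L f id (\<lambda>k hist. lam k)"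
  by (simp add: fun_eq_iff team_prob_sec_def team_prob_pub_def)

lemma team_prob_pub_unanimous:
  assumes probs: "\<And>n h. n < N \<Longrightarrow> prob_space (sig_dist (f n h))"
    and unanimous: "unanimous_for N L c"
    and order: "\<And>k. k < N \<Longrightarrow> \<sigma> k < N"
  shows "team_prob_pub N L f \<sigma> s h d =
    (if d = c then \<Prod>k<N. dec_prob (f (\<sigma> k) h) (s k (replicate k c)) c
     else 1 - (\<Prod>k<N. dec_prob (f (\<sigma> k) h) (s k (replicate k c)) c))"
proof -
  have "\<And>k hist. k < N \<Longrightarrow>
          dec_prob (f (\<sigma> k) h) (s k hist) True + dec_prob (f (\<sigma> k) h) (s k hist) False = 1"
    using dec_prob_complement probs order by blast
  then show ?thesis
    unfolding team_prob_pub_def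
    by (rule sequential_unanimous_prob[of N "\<lambda>k hist. dec_prob (f (\<sigma> k) h) (s k hist)",
          OF _ unanimous])
qed

lemma team_prob_sec_unanimous:
  assumes probs: "\<And>n h. n < N \<Longrightarrow> prob_space (sig_dist (f n h))"
    and unanimous: "unanimous_for N L c"
  shows "team_prob_sec N L f lam h d =
    (if d = c then \<Prod>n<N. dec_prob (f n h) (lam n) c
     else 1 - (\<Prod>n<N. dec_prob (f n h) (lam n) c))"
  unfolding team_prob_sec_as_pub
  by (simp add: team_prob_pub_unanimous[OF probs unanimous])

lemma team_prob_sec_cong:
  assumes "\<And>n. n < N \<Longrightarrow> lam n = lam' n"
  shows "team_prob_sec N L f lam h d = team_prob_sec N L f lam' h d"
  unfolding team_prob_sec_def using assms by (intro sum.cong prod.cong) auto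

(* The threshold agent n uses under the public strategy s when all agents before her
   in the order sigma have voted c: the only history that matters under unanimity. *)
definition induced_thresholds ::
  "nat \<Rightarrow> (nat \<Rightarrow> nat) \<Rightarrow> (nat \<Rightarrow> bool list \<Rightarrow> real) \<Rightarrow> bool \<Rightarrow> nat \<Rightarrow> real" where
  "induced_thresholds N \<sigma> s c n =
     (let k = inv_into {..<N} \<sigma> n in s k (replicate k c))"

lemma team_prob_pub_eq_sec:
  assumes probs: "\<And>n h. n < N \<Longrightarrow> prob_space (sig_dist (f n h))"
    and unanimous: "unanimous_for N L c"
    and bij: "bij_betw \<sigma> {..<N} {..<N}"
  shows "team_prob_pub N L f \<sigma> s h d = team_prob_sec N L f (induced_thresholds N \<sigma> s c) h d"
proof -
  have "(\<Prod>n<N. dec_prob (f n h) (induced_thresholds N \<sigma> s c n) c)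
      = (\<Prod>k<N. dec_prob (f (\<sigma> k) h) (induced_thresholds N \<sigma> s c (\<sigma> k)) c)"
    by (rule prod.reindex_bij_betw[OF bij, symmetric])
  also have "\<dots> = (\<Prod>k<N. dec_prob (f (\<sigma> k) h) (s k (replicate k c)) c)"
    by (intro prod.cong)
      (simp_all add: induced_thresholds_def inv_into_f_f bij_betw_imp_inj_on[OF bij])
  finally show ?thesis
    using bij_betwE[OF bij]
    by (simp add: team_prob_pub_unanimous[OF probs unanimous] team_prob_sec_unanimous[OF probs unanimous])
qed

lemma team_prob_pub_fixed_thresholds:
  assumes probs: "\<And>n h. n < N \<Longrightarrow> prob_space (sig_dist (f n h))"
    and unanimous: "unanimous_for N L c"
    and bij: "bij_betw \<sigma> {..<N} {..<N}"
  shows "team_prob_pub N L f \<sigma> (\<lambda>k hist. lam (\<sigma> k)) h d = team_prob_sec N L f lam h d"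
proof -
  have "induced_thresholds N \<sigma> (\<lambda>k hist. lam (\<sigma> k)) c n = lam n" if "n < N" for n
    using that bij by (simp add: induced_thresholds_def bij_betw_inv_into_right)
  then have "team_prob_sec N L f (induced_thresholds N \<sigma> (\<lambda>k hist. lam (\<sigma> k)) c) h d
           = team_prob_sec N L f lam h d"
    by (rule team_prob_sec_cong)
  then show ?thesis
    using team_prob_pub_eq_sec[OF probs unanimous bij] by simp
qed

lemma risk_pub_eq_sec:
  assumes probs: "\<And>n h. n < N \<Longrightarrow> prob_space (sig_dist (f n h))"
    and unanimous: "unanimous_for N L c"
    and bij: "bij_betw \<sigma> {..<N} {..<N}"
  shows "risk_pub N L f p0 c10 c01 \<sigma> s
       = risk_sec N L f p0 c10 c01 (induced_thresholds N \<sigma> s c)"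
  unfolding risk_pub_def risk_sec_def by (simp add: team_prob_pub_eq_sec[OF assms])

lemma risk_pub_fixed_thresholds:
  assumes probs: "\<And>n h. n < N \<Longrightarrow> prob_space (sig_dist (f n h))"
    and unanimous: "unanimous_for N L c"
    and bij: "bij_betw \<sigma> {..<N} {..<N}"
  shows "risk_pub N L f p0 c10 c01 \<sigma> (\<lambda>k hist. lam (\<sigma> k)) = risk_sec N L f p0 c10 c01 lam"
  unfolding risk_pub_def risk_sec_def by (simp add: team_prob_pub_fixed_thresholds[OF assms, where lam=lam])

(* Public and secret voting achieve the same set of risks, hence the same minimum. *)
lemma min_risk_pub_eq_sec:
  assumes probs: "\<And>n h. n < N \<Longrightarrow> prob_space (sig_dist (f n h))"
    and unanimous: "unanimous_for N L c"
    and bij: "bij_betw \<sigma> {..<N} {..<N}"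
  shows "min_risk_pub N L f p0 c10 c01 \<sigma> = min_risk_sec N L f p0 c10 c01"
proof -
  have "range (risk_pub N L f p0 c10 c01 \<sigma>) = range (risk_sec N L f p0 c10 c01)"
  proof (intro equalityI image_subsetI)
    fix s
    show "risk_pub N L f p0 c10 c01 \<sigma> s \<in> range (risk_sec N L f p0 c10 c01)"
      using risk_pub_eq_sec[OF assms] by simp
  next
    fix lam
    have "risk_pub N L f p0 c10 c01 \<sigma> (\<lambda>k hist. lam (\<sigma> k)) = risk_sec N L f p0 c10 c01 lam"
      by (rule risk_pub_fixed_thresholds[OF assms])
    then show "risk_sec N L f p0 c10 c01 lam \<in> range (risk_pub N L f p0 c10 c01 \<sigma>)"
      by (metis rangeI)
  qed
  then show ?thesis
    unfolding min_risk_pub_def min_risk_sec_def by simp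
qed

lemma risk_sec_or:
  assumes probs: "\<And>n h. n < N \<Longrightarrow> prob_space (sig_dist (f n h))"
  shows "risk_sec N 1 f p0 c10 c01 lam =
           c10 * p0 * (1 - (\<Prod>n<N. 1 - PeI f n (lam n)))
         + c01 * (1 - p0) * (\<Prod>n<N. PeII f n (lam n))"
proof -
  have "1 - PeI f n (lam n) = dec_prob (f n False) (lam n) False" if "n < N" for n
    using dec_prob_complement[OF probs[OF that]] by (simp add: PeI_def algebra_simps)
  then have "(\<Prod>n<N. 1 - PeI f n (lam n)) = (\<Prod>n<N. dec_prob (f n False) (lam n) False)"
    by (intro prod.cong) auto
  moreover have "unanimous_for N 1 False"
    by (simp add: unanimous_for_def)
  ultimately show ?thesis
    unfolding risk_sec_def by (simp add: team_prob_sec_unanimous[OF probs] PeII_def)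
qed

lemma risk_sec_and:
  assumes probs: "\<And>n h. n < N \<Longrightarrow> prob_space (sig_dist (f n h))"
  shows "risk_sec N N f p0 c10 c01 lam =
           c10 * p0 * (\<Prod>n<N. PeI f n (lam n))
         + c01 * (1 - p0) * (1 - (\<Prod>n<N. 1 - PeII f n (lam n)))"
proof -
  have "1 - PeII f n (lam n) = dec_prob (f n True) (lam n) True" if "n < N" for n
    using dec_prob_complement[OF probs[OF that]] by (simp add: PeII_def algebra_simps)
  then have "(\<Prod>n<N. 1 - PeII f n (lam n)) = (\<Prod>n<N. dec_prob (f n True) (lam n) True)"
    by (intro prod.cong) auto
  moreover have "unanimous_for N N True"
    by (simp add: unanimous_for_def)
  ultimately show ?thesis
    unfolding risk_sec_def by (simp add: team_prob_sec_unanimous[OF probs] PeI_def)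
qed


theorem theorem3:
  fixes N L :: nat
    and f :: "nat \<Rightarrow> bool \<Rightarrow> real \<Rightarrow> real"
    and p0 c10 c01 :: real
  assumes N: "N \<ge> 1"
    and p0: "0 < p0" "p0 < 1"
    and costs: "c10 > 0" "c01 > 0"
    and dens_meas: "\<And>n h. n < N \<Longrightarrow> f n h \<in> borel_measurable lborel"
    and dens_nonneg: "\<And>n h y. n < N \<Longrightarrow> 0 \<le> f n h y"
    and dens_prob: "\<And>n h. n < N \<Longrightarrow> prob_space (sig_dist (f n h))"
    and MLR: "\<And>n. n < N \<Longrightarrow> strict_mono (\<lambda>y. f n True y / f n False y)"
    and unanimity: "L = 1 \<or> L = N"
  shows
    "(\<forall>\<sigma>. bij_betw \<sigma> {..<N} {..<N} \<longrightarrow>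
         min_risk_pub N L f p0 c10 c01 \<sigma> = min_risk_sec N L f p0 c10 c01)
     \<and> (L = 1 \<longrightarrow> min_risk_sec N L f p0 c10 c01 =
          (INF lam. c10 * p0 * (1 - (\<Prod>n<N. 1 - PeI f n (lam n)))
                    + c01 * (1 - p0) * (\<Prod>n<N. PeII f n (lam n))))
     \<and> (L = N \<longrightarrow> min_risk_sec N L f p0 c10 c01 =
          (INF lam. c10 * p0 * (\<Prod>n<N. PeI f n (lam n))
                    + c01 * (1 - p0) * (1 - (\<Prod>n<N. 1 - PeII f n (lam n)))))
     \<and> (\<forall>lam. risk_sec N L f p0 c10 c01 lam = min_risk_sec N L f p0 c10 c01 \<longrightarrow>
          (\<forall>\<sigma>. bij_betw \<sigma> {..<N} {..<N} \<longrightarrow>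
             risk_pub N L f p0 c10 c01 \<sigma> (\<lambda>k hist. lam (\<sigma> k))
               = min_risk_pub N L f p0 c10 c01 \<sigma>))"
  proof -
  define c where "c = (L \<noteq> 1)"
  have unanimous: "unanimous_for N L c"
    using unanimity by (auto simp: unanimous_for_def c_def)
  have same_min: "\<forall>\<sigma>. bij_betw \<sigma> {..<N} {..<N} \<longrightarrow>
      min_risk_pub N L f p0 c10 c01 \<sigma> = min_risk_sec N L f p0 c10 c01"
    using min_risk_pub_eq_sec[where N=N and f=f, OF dens_prob unanimous] by blast
  moreover have "L = 1 \<longrightarrow> min_risk_sec N L f p0 c10 c01 =
      (INF lam. c10 * p0 * (1 - (\<Prod>n<N. 1 - PeI f n (lam n)))
                + c01 * (1 - p0) * (\<Prod>n<N. PeII f n (lam n)))"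
    unfolding min_risk_sec_def using risk_sec_or[where N=N and f=f, OF dens_prob] by simp
  moreover have "L = N \<longrightarrow> min_risk_sec N L f p0 c10 c01 =
      (INF lam. c10 * p0 * (\<Prod>n<N. PeI f n (lam n))
                + c01 * (1 - p0) * (1 - (\<Prod>n<N. 1 - PeII f n (lam n))))"
    unfolding min_risk_sec_def using risk_sec_and[where N=N and f=f, OF dens_prob] by simp
  moreover have "\<forall>lam. risk_sec N L f p0 c10 c01 lam = min_risk_sec N L f p0 c10 c01 \<longrightarrow>
      (\<forall>\<sigma>. bij_betw \<sigma> {..<N} {..<N} \<longrightarrow>
         risk_pub N L f p0 c10 c01 \<sigma> (\<lambda>k hist. lam (\<sigma> k))
           = min_risk_pub N L f p0 c10 c01 \<sigma>)"
    using risk_pub_fixed_thresholds[where N=N and f=f, OF dens_prob unanimous] same_min by simp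
  ultimately show ?thesis by blast
qed

end
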